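(* Let $S=\{R_0,\dots,R_d\}$ be a quasi-thin scheme on $X$, $\mathbb F$ a field, $x\in X$, $\mathcal T=\mathcal T(x)$, $E_a^*=E_a^*(x)$, and fix a total order $\preceq$ on $X$. Let $\mathcal U=\{(g,h):k_g=k_h=|R_{g'}R_h|=2\}\cup\{(g,h):(g,h)\text{ is a bad pair of }S\}$. For $(i,j)\in\mathcal U$ write $xR_i=\{u_1,u_2\}$, $xR_j=\{v_1,v_2\}$ with $u_1\prec u_2$, $v_1\prec v_2$, and set $B_{ij}=E_{u_1v_1}+E_{u_2v_2}$. Then $$\mathcal B=\{B_{ij}:(i,j)\in\mathcal U\}\cup\{E_y^*JE_z^*:R_y,R_z\in S\}$$ is an $\mathbb F$-basis of $\mathcal T$.
   Context: Let $X$ be a nonempty finite set. A scheme of class $d$ on $X$ is a partition $S=\{R_0,\dots,R_d\}$ of $X\times X$ into nonempty sets such that $R_0=\{(b,b):b\in X\}$; for each $c$ there is $c'$ with $R_{c'}=\{(f,e):(e,f)\in R_c\}$; and for all $i,j,k$ the intersection number $p_{ij}^k=|\{\ell\in X:(m,\ell)\in R_i,(\ell,n)\in R_j\}|$ does not depend on $(m,n)\in R_k$. The valency is $k_a=p_{aa'}^0$; quasi-thin means all $k_a\le 2$. Complex product: $R_aR_b=\{R_c:p_{ab}^c>0\}$. For $y\in X$, $yR_a=\{z:(y,z)\in R_a\}$. $A_a\in M_X(\mathbb F)$ is the $(0,1)$ adjacency matrix of $R_a$, $E_a^*(y)$ is the diagonal $(0,1)$-matrix with ones exactly at positions indexed by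 $yR_a$, $E_{uv}$ is the matrix unit at $(u,v)$, $J$ is the all-ones matrix. The Terwilliger $\mathbb F$-algebra $\mathcal T(y)$ is the $\mathbb F$-subalgebra of $M_X(\mathbb F)$ generated by $A_0,\dots,A_d,E_0^*(y),\dots,E_d^*(y)$. Bad pair: $(u,v)$ is a bad pair of $S$ if there exist an integer $a\ge1$ and $R_{i_b},R_{j_b},R_{\ell_b}\in S$ ($b=0,\dots,a$) with $i_0=u$, $\ell_a=v$, $k_{i_b}=k_{\ell_b}=2$ and $p_{i_bj_b}^{\ell_b}=1$ for all $b$, $\ell_c=i_{c+1}$ for $0\le c\le a-1$, and $|R_{u'}R_v|=1$. (For $(i,j)\in\mathcal U$ one has $k_i=k_j=2$.) *)

theory Defs
  imports Complex_Main "HOL-Library.Function_Algebras"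
begin

text \<open>The finite set X is the universe of a finite type 'a. Matrices in M_X(F) are
functions 'a => 'a => 'f. A scheme of class d is a family R 0, ..., R d of relations.\<close>

definition is_scheme :: "nat \<Rightarrow> (nat \<Rightarrow> ('a::finite \<times> 'a) set) \<Rightarrow> bool" where
  "is_scheme d R \<longleftrightarrow>
     (\<forall>i\<le>d. R i \<noteq> {}) \<and>
     (\<forall>p. \<exists>!i. i \<le> d \<and> p \<in> R i) \<and>
     R 0 = {(b, b) | b. True} \<and>
     (\<forall>c\<le>d. \<exists>c'\<le>d. R c' = {(f, e). (e, f) \<in> R c}) \<and>
     (\<forall>i\<le>d. \<forall>j\<le>d. \<forall>k\<le>d. \<forall>m n m2 n2. (m, n) \<in> R k \<longrightarrow> (m2, n2) \<in> R k \<longrightarrow>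
        card {l. (m, l) \<in> R i \<and> (l, n) \<in> R j} = card {l. (m2, l) \<in> R i \<and> (l, n2) \<in> R j})"

definition inum :: "(nat \<Rightarrow> ('a::finite \<times> 'a) set) \<Rightarrow> nat \<Rightarrow> nat \<Rightarrow> nat \<Rightarrow> nat" where
  "inum R i j k = (let (m, n) = (SOME q. q \<in> R k) in card {l. (m, l) \<in> R i \<and> (l, n) \<in> R j})"

definition conv_idx :: "nat \<Rightarrow> (nat \<Rightarrow> ('a \<times> 'a) set) \<Rightarrow> nat \<Rightarrow> nat" where
  "conv_idx d R c = (THE c'. c' \<le> d \<and> R c' = {(f, e). (e, f) \<in> R c})"

definition valency :: "nat \<Rightarrow> (nat \<Rightarrow> ('a::finite \<times> 'a) set) \<Rightarrow> nat \<Rightarrow> nat" where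
  "valency d R a = inum R a (conv_idx d R a) 0"

definition quasi_thin :: "nat \<Rightarrow> (nat \<Rightarrow> ('a::finite \<times> 'a) set) \<Rightarrow> bool" where
  "quasi_thin d R \<longleftrightarrow> (\<forall>a\<le>d. valency d R a \<le> 2)"

text \<open>Complex product R_a R_b, represented by the set of indices c of its members.\<close>
definition cprod :: "nat \<Rightarrow> (nat \<Rightarrow> ('a::finite \<times> 'a) set) \<Rightarrow> nat \<Rightarrow> nat \<Rightarrow> nat set" where
  "cprod d R a b = {c. c \<le> d \<and> inum R a b c > 0}"

definition bad_pair :: "nat \<Rightarrow> (nat \<Rightarrow> ('a::finite \<times> 'a) set) \<Rightarrow> nat \<Rightarrow> nat \<Rightarrow> bool" where
  "bad_pair d R u v \<longleftrightarrow>
     (\<exists>(a::nat) (ii::nat \<Rightarrow> nat) (jj::nat \<Rightarrow> nat) (ll::nat \<Rightarrow> nat). a \<ge> 1 \<and>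
        (\<forall>b\<le>a. ii b \<le> d \<and> jj b \<le> d \<and> ll b \<le> d) \<and>
        ii 0 = u \<and> ll a = v \<and>
        (\<forall>b\<le>a. valency d R (ii b) = 2 \<and> valency d R (ll b) = 2 \<and> inum R (ii b) (jj b) (ll b) = 1) \<and>
        (\<forall>c<a. ll c = ii (Suc c))) \<and>
     card (cprod d R (conv_idx d R u) v) = 1"

definition calU :: "nat \<Rightarrow> (nat \<Rightarrow> ('a::finite \<times> 'a) set) \<Rightarrow> (nat \<times> nat) set" where
  "calU d R =
     {(g, h). g \<le> d \<and> h \<le> d \<and> valency d R g = 2 \<and> valency d R h = 2 \<and>
              card (cprod d R (conv_idx d R g) h) = 2}
     \<union> {(g, h). g \<le> d \<and> h \<le> d \<and> bad_pair d R g h}"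

definition mmult :: "('a::finite \<Rightarrow> 'a \<Rightarrow> 'f::field) \<Rightarrow> ('a \<Rightarrow> 'a \<Rightarrow> 'f) \<Rightarrow> 'a \<Rightarrow> 'a \<Rightarrow> 'f" where
  "mmult M N = (\<lambda>u v. \<Sum>w\<in>UNIV. M u w * N w v)"

definition msmult :: "'f::field \<Rightarrow> ('a \<Rightarrow> 'a \<Rightarrow> 'f) \<Rightarrow> 'a \<Rightarrow> 'a \<Rightarrow> 'f" where
  "msmult c M = (\<lambda>u v. c * M u v)"

definition adj :: "(nat \<Rightarrow> ('a \<times> 'a) set) \<Rightarrow> nat \<Rightarrow> 'a \<Rightarrow> 'a \<Rightarrow> 'f::field" where
  "adj R a = (\<lambda>u v. if (u, v) \<in> R a then 1 else 0)"

definition dual_idem :: "(nat \<Rightarrow> ('a \<times> 'a) set) \<Rightarrow> 'a \<Rightarrow> nat \<Rightarrow> 'a \<Rightarrow> 'a \<Rightarrow> 'f::field" where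
  "dual_idem R y a = (\<lambda>u v. if u = v \<and> (y, u) \<in> R a then 1 else 0)"

definition munit :: "'a \<Rightarrow> 'a \<Rightarrow> 'a \<Rightarrow> 'a \<Rightarrow> 'f::field" where
  "munit a b = (\<lambda>u v. if u = a \<and> v = b then 1 else 0)"

definition allones :: "'a \<Rightarrow> 'a \<Rightarrow> 'f::field" where
  "allones = (\<lambda>u v. 1)"

inductive_set gen_alg :: "('a::finite \<Rightarrow> 'a \<Rightarrow> 'f::field) set \<Rightarrow> ('a \<Rightarrow> 'a \<Rightarrow> 'f) set"
  for G where
  gen: "M \<in> G \<Longrightarrow> M \<in> gen_alg G"
| one: "munit_diag \<in> gen_alg G" if "munit_diag = (\<lambda>u v. if u = v then 1 else 0)"
| add: "M \<in> gen_alg G \<Longrightarrow> N \<in> gen_alg G \<Longrightarrow> M + N \<in> gen_alg G"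
| smult: "M \<in> gen_alg G \<Longrightarrow> msmult c M \<in> gen_alg G"
| mult: "M \<in> gen_alg G \<Longrightarrow> N \<in> gen_alg G \<Longrightarrow> mmult M N \<in> gen_alg G"

definition terwilliger :: "nat \<Rightarrow> (nat \<Rightarrow> ('a::finite \<times> 'a) set) \<Rightarrow> 'a \<Rightarrow> ('a \<Rightarrow> 'a \<Rightarrow> 'f::field) set" where
  "terwilliger d R y = gen_alg ({adj R a | a. a \<le> d} \<union> {dual_idem R y a | a. a \<le> d})"

definition rmin :: "'a rel \<Rightarrow> 'a set \<Rightarrow> 'a" where
  "rmin r A = (THE u. u \<in> A \<and> (\<forall>w\<in>A. (u, w) \<in> r))"

definition rmax :: "'a rel \<Rightarrow> 'a set \<Rightarrow> 'a" where
  "rmax r A = (THE u. u \<in> A \<and> (\<forall>w\<in>A. (w, u) \<in> r))"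

definition Bmat :: "'a rel \<Rightarrow> (nat \<Rightarrow> ('a \<times> 'a) set) \<Rightarrow> 'a \<Rightarrow> nat \<Rightarrow> nat \<Rightarrow> 'a \<Rightarrow> 'a \<Rightarrow> 'f::field" where
  "Bmat r R x i j =
     munit (rmin r {z. (x, z) \<in> R i}) (rmin r {z. (x, z) \<in> R j})
   + munit (rmax r {z. (x, z) \<in> R i}) (rmax r {z. (x, z) \<in> R j})"

end

theory Submission
  imports Defs
begin

text \<open>
  Write [z] for the index a with z in xR_a, and let the parity of z say whether z is the least
  element of xR_[z]. Call (u, v), (u', v') of the same pattern if [u] = [u'], [v] = [v'] and, when
  ([u], [v]) is in U, u and v have equal parities iff u' and v' do. The patterns are the supports
  of the B_ij and E*_i J E*_j - B_ij for (i, j) in U and of the E*_i J E*_j for (i, j) not in U, so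
  the theorem amounts to T being the space of matrices constant on patterns.

  T lies in that space: by regularity of the intersection numbers, each relation restricted to a
  block xR_a x xR_b of 2-element sets is constant along both diagonals, and on the whole block iff
  |R_a' R_b| = 1, so the generators are constant on patterns; closure under products needs U to be
  transitive, which holds as U is the transitive closure of the relation "k_i = k_l = 2 and
  p_ij^l = 1 for some j" (bad pairs being its chains with |R_u' R_v| = 1). Conversely each B_ij lies
  in T: for a step (i, l) of that relation E*_i A_j E*_l is B_il or E*_i J E*_l - B_il, and
  B_ij B_jl = B_il.
\<close>

lemma msmult_module: "module (msmult :: 'f::field \<Rightarrow> ('a \<Rightarrow> 'a \<Rightarrow> 'f) \<Rightarrow> _)"
  by unfold_locales (auto simp: msmult_def fun_eq_iff algebra_simps)

lemma sum_fun_apply: "(\<Sum>i\<in>A. f i) x = (\<Sum>i\<in>A. f i x)"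
  by (induction A rule: infinite_finite_induct) auto

lemma mmult_add_left: "mmult (M + N) P = mmult M P + mmult N P"
  by (simp add: mmult_def fun_eq_iff distrib_right sum.distrib)

lemma mmult_add_right: "mmult M (N + P) = mmult M N + mmult M P"
  by (simp add: mmult_def fun_eq_iff distrib_left sum.distrib)

lemma mmult_munit:
  "mmult (munit a b) (munit b' c) = (if b = b' then munit a c else (0 :: 'a::finite \<Rightarrow> 'a \<Rightarrow> 'f::field))"
  unfolding mmult_def munit_def fun_eq_iff by (auto simp: if_distrib[of "\<lambda>z. z * _"] cong: if_cong)

lemma mmult_dual_idem_left:
  "mmult (dual_idem R y a) M = (\<lambda>u v. if (y, u) \<in> R a then M u v else (0::'f::field))"
  unfolding mmult_def dual_idem_def fun_eq_iff by (auto simp: if_distrib[of "\<lambda>z. z * _"] cong: if_cong)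

lemma mmult_dual_idem_right:
  "mmult M (dual_idem R y b) = (\<lambda>u v. if (y, v) \<in> R b then M u v else (0::'f::field))"
proof (intro ext)
  fix u v
  have "(\<Sum>w\<in>UNIV. M u w * dual_idem R y b w v) =
      (\<Sum>w\<in>UNIV. if w = v then (if (y, v) \<in> R b then M u v else 0) else 0)"
    by (rule sum.cong) (auto simp: dual_idem_def)
  then show "mmult M (dual_idem R y b) u v = (if (y, v) \<in> R b then M u v else 0)"
    by (simp add: mmult_def)
qed

lemma gen_alg_zero: "(0 :: 'a::finite \<Rightarrow> 'a \<Rightarrow> 'f::field) \<in> gen_alg G"
proof -
  have "msmult 0 (\<lambda>u v. if u = v then 1 else 0) \<in> gen_alg G"
    by (intro gen_alg.smult gen_alg.one) (rule refl)
  moreover have "msmult 0 (\<lambda>u v. if u = v then 1 else 0) = (0 :: 'a \<Rightarrow> 'a \<Rightarrow> 'f)"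
    by (simp add: msmult_def fun_eq_iff)
  ultimately show ?thesis by simp
qed

lemma gen_alg_diff:
  assumes "M \<in> gen_alg G" "N \<in> gen_alg G"
  shows "M - N \<in> gen_alg G"
proof -
  have "M + msmult (-1) N \<in> gen_alg G" using assms by (intro gen_alg.add gen_alg.smult)
  moreover have "M + msmult (-1) N = M - N" by (simp add: msmult_def fun_eq_iff)
  ultimately show ?thesis by simp
qed

lemma gen_alg_sum: "finite A \<Longrightarrow> (\<And>i. i \<in> A \<Longrightarrow> f i \<in> gen_alg G) \<Longrightarrow> sum f A \<in> gen_alg G"
  by (induction A rule: finite_induct) (auto intro: gen_alg_zero gen_alg.add)

lemma subspace_gen_alg: "module.subspace msmult (gen_alg G)"
  by (rule module.subspaceI[OF msmult_module]) (auto intro: gen_alg_zero gen_alg.add gen_alg.smult)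

lemma independent_if_triangular:
  fixes f :: "'i \<Rightarrow> 'a \<Rightarrow> 'a \<Rightarrow> 'f::field" and rank :: "'i \<Rightarrow> nat"
  assumes diag: "\<And>i. i \<in> I \<Longrightarrow> f i (p i) (q i) \<noteq> 0"
    and lower: "\<And>i j. i \<in> I \<Longrightarrow> j \<in> I \<Longrightarrow> f j (p i) (q i) \<noteq> 0 \<Longrightarrow> f j \<noteq> f i \<Longrightarrow> rank j < rank i"
  shows "\<not> module.dependent msmult (f ` I)"
proof -
  interpret module "msmult :: 'f \<Rightarrow> ('a \<Rightarrow> 'a \<Rightarrow> 'f) \<Rightarrow> _" by (rule msmult_module)
  show ?thesis
    unfolding dependent_explicit
  proof (intro notI, elim exE conjE bexE)
    fix t c w
    assume fin: "finite t" and sub: "t \<subseteq> f ` I" and comb: "(\<Sum>v\<in>t. msmult (c v) v) = 0"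
      and w: "w \<in> t" "c w \<noteq> 0"
    have eval: "(\<Sum>v\<in>t. c v * v (p i) (q i)) = 0" for i
      using fun_cong[OF fun_cong[OF comb, of "p i"], of "q i"] by (simp add: sum_fun_apply msmult_def)
    have "c (f i) = 0" if "i \<in> I" "f i \<in> t" for i
      using that
    proof (induction "rank i" arbitrary: i rule: less_induct)
      case less
      have zero: "c v * v (p i) (q i) = 0" if v: "v \<in> t - {f i}" for v
      proof -
        obtain j where j: "j \<in> I" "v = f j" using sub v by blast
        show ?thesis
        proof (cases "f j (p i) (q i) = 0")
          case False
          then have "rank j < rank i" using lower[OF less.prems(1) j(1)] v j(2) by blast
          then show ?thesis using less.hyps j v by auto
        qed (use j in simp)
      qed
      have "(\<Sum>v\<in>t - {f i}. c v * v (p i) (q i)) = 0" using zero by (intro sum.neutral) blast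
      then have "(\<Sum>v\<in>t. c v * v (p i) (q i)) = c (f i) * f i (p i) (q i)"
        using sum.remove[OF fin less.prems(2), of "\<lambda>v. c v * v (p i) (q i)"] by simp
      then show ?case using eval diag[OF less.prems(1)] by simp
    qed
    then show False using w sub by blast
  qed
qed

lemma rmin_eqI:
  assumes "linear_order_on UNIV r" "u \<in> A" "\<And>w. w \<in> A \<Longrightarrow> (u, w) \<in> r"
  shows "rmin r A = u"
  unfolding rmin_def using assms
  by (intro the_equality) (auto simp: linear_order_on_def partial_order_on_def antisym_def)

lemma rmax_eqI:
  assumes "linear_order_on UNIV r" "u \<in> A" "\<And>w. w \<in> A \<Longrightarrow> (w, u) \<in> r"
  shows "rmax r A = u"
  unfolding rmax_def using assms
  by (intro the_equality) (auto simp: linear_order_on_def partial_order_on_def antisym_def)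

lemma rmin_rmax_singleton:
  assumes "linear_order_on UNIV r"
  shows "rmin r {u} = u" "rmax r {u} = u"
  using assms by (auto intro!: rmin_eqI rmax_eqI simp: linear_order_on_def partial_order_on_def
      preorder_on_def refl_on_def)

lemma rmin_rmax_doubleton:
  assumes lin: "linear_order_on UNIV r" and "card A = 2"
  shows "A = {rmin r A, rmax r A}" "rmin r A \<noteq> rmax r A"
proof -
  obtain u v where A: "A = {u, v}" "u \<noteq> v" "(u, v) \<in> r"
  proof -
    obtain u v where "A = {u, v}" "u \<noteq> v" using \<open>card A = 2\<close> card_2_iff by metis
    moreover have "(u, v) \<in> r \<or> (v, u) \<in> r"
      using lin \<open>u \<noteq> v\<close> by (auto simp: linear_order_on_def total_on_def)
    ultimately show ?thesis using that by (metis insert_commute)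
  qed
  have refl: "(w, w) \<in> r" for w
    using lin by (auto simp: linear_order_on_def partial_order_on_def preorder_on_def refl_on_def)
  have "rmin r A = u" "rmax r A = v"
    using A refl by (auto intro!: rmin_eqI[OF lin] rmax_eqI[OF lin])
  then show "A = {rmin r A, rmax r A}" "rmin r A \<noteq> rmax r A" using A by auto
qed

lemma card_doubleton_filter:
  "u \<noteq> v \<Longrightarrow> card {z \<in> {u, v}. P z} = of_bool (P u) + of_bool (P v)"
proof -
  assume "u \<noteq> v"
  have "{z \<in> {u, v}. P z} = (if P u then {u} else {}) \<union> (if P v then {v} else {})" by auto
  then show ?thesis using \<open>u \<noteq> v\<close> by (simp add: card_Un_disjoint)
qed

section \<open>Association schemes\<close>

locale scheme =
  fixes d :: nat and R :: "nat \<Rightarrow> ('a::finite \<times> 'a) set"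
  assumes is_scheme: "is_scheme d R"
begin

lemma rel_nonempty: "i \<le> d \<Longrightarrow> R i \<noteq> {}"
  using is_scheme by (simp add: is_scheme_def)

lemma ex1_rel: "\<exists>!i. i \<le> d \<and> p \<in> R i"
  using is_scheme by (cases p) (simp add: is_scheme_def)

lemma rel_unique: "i \<le> d \<Longrightarrow> j \<le> d \<Longrightarrow> p \<in> R i \<Longrightarrow> p \<in> R j \<Longrightarrow> i = j"
  using ex1_rel by blast

lemma in_rel_0_iff: "(u, v) \<in> R 0 \<longleftrightarrow> u = v"
  using is_scheme by (auto simp: is_scheme_def)

lemma card_paths_eq:
  assumes "i \<le> d" "j \<le> d" "k \<le> d" "(m, n) \<in> R k" "(m', n') \<in> R k"
  shows "card {l. (m, l) \<in> R i \<and> (l, n) \<in> R j} = card {l. (m', l) \<in> R i \<and> (l, n') \<in> R j}"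
proof -
  have "\<forall>i\<le>d. \<forall>j\<le>d. \<forall>k\<le>d. \<forall>m n m' n'. (m, n) \<in> R k \<longrightarrow> (m', n') \<in> R k \<longrightarrow>
      card {l. (m, l) \<in> R i \<and> (l, n) \<in> R j} = card {l. (m', l) \<in> R i \<and> (l, n') \<in> R j}"
    using is_scheme unfolding is_scheme_def by (elim conjE) assumption
  then show ?thesis using assms by blast
qed

definition rel_of :: "'a \<times> 'a \<Rightarrow> nat" where
  "rel_of p = (THE i. i \<le> d \<and> p \<in> R i)"

lemma rel_of: "rel_of p \<le> d" "p \<in> R (rel_of p)"
  using theI'[OF ex1_rel] unfolding rel_of_def by blast+

lemma in_rel_iff: "i \<le> d \<Longrightarrow> p \<in> R i \<longleftrightarrow> rel_of p = i"
  using rel_of rel_unique by blast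

lemma conv_idx:
  assumes "c \<le> d"
  shows "conv_idx d R c \<le> d" "(u, v) \<in> R (conv_idx d R c) \<longleftrightarrow> (v, u) \<in> R c"
proof -
  have "\<forall>c\<le>d. \<exists>c'\<le>d. R c' = {(f, e). (e, f) \<in> R c}"
    using is_scheme unfolding is_scheme_def by (elim conjE) assumption
  then obtain c' where c': "c' \<le> d" "R c' = {(f, e). (e, f) \<in> R c}"
    using assms by blast
  have "conv_idx d R c = c'"
    unfolding conv_idx_def
  proof (rule the_equality)
    fix c'' assume "c'' \<le> d \<and> R c'' = {(f, e). (e, f) \<in> R c}"
    moreover obtain p where "p \<in> R c'" using rel_nonempty c' by blast
    ultimately show "c'' = c'" using c' rel_unique by metis
  qed (use c' in simp)
  then show "conv_idx d R c \<le> d" "(u, v) \<in> R (conv_idx d R c) \<longleftrightarrow> (v, u) \<in> R c"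
    using c' by auto
qed

lemma inum_eq:
  assumes "i \<le> d" "j \<le> d" "k \<le> d" "(m, n) \<in> R k"
  shows "inum R i j k = card {l. (m, l) \<in> R i \<and> (l, n) \<in> R j}"
proof -
  obtain m' n' where "(SOME q. q \<in> R k) = (m', n')" "(m', n') \<in> R k"
    using someI_ex[of "\<lambda>q. q \<in> R k"] assms(4) by (metis surj_pair)
  then show ?thesis using card_paths_eq[OF assms(1-3) _ assms(4)] by (simp add: inum_def)
qed

definition nbhd :: "'a \<Rightarrow> nat \<Rightarrow> 'a set" where
  "nbhd y a = {z. (y, z) \<in> R a}"

lemma valency_eq_card_nbhd:
  assumes "a \<le> d"
  shows "valency d R a = card (nbhd y a)"
proof -
  have "valency d R a = card {l. (y, l) \<in> R a \<and> (l, y) \<in> R (conv_idx d R a)}"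
    unfolding valency_def using inum_eq[OF assms conv_idx(1)[OF assms]] by (simp add: in_rel_0_iff)
  then show ?thesis using conv_idx(2)[OF assms] by (simp add: nbhd_def)
qed

lemma nbhd_nonempty:
  assumes "a \<le> d"
  shows "nbhd y a \<noteq> {}"
proof -
  obtain m n where "(m, n) \<in> R a" using rel_nonempty[OF assms] by auto
  then have "card (nbhd m a) > 0" by (auto simp: nbhd_def card_gt_0_iff)
  moreover have "card (nbhd y a) = card (nbhd m a)"
    using valency_eq_card_nbhd[OF assms, of y] valency_eq_card_nbhd[OF assms, of m] by simp
  ultimately show ?thesis by auto
qed

lemma card_nbhd_row_eq:
  assumes "a \<le> d" "b \<le> d" "e \<le> d" "u \<in> nbhd y a" "u' \<in> nbhd y a"
  shows "card {v \<in> nbhd y b. (u, v) \<in> R e} = card {v \<in> nbhd y b. (u', v) \<in> R e}"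
  using card_paths_eq[of b "conv_idx d R e" a y u y u'] assms conv_idx[OF assms(3)]
  by (simp add: nbhd_def)

lemma card_nbhd_col_eq:
  assumes "a \<le> d" "b \<le> d" "e \<le> d" "v \<in> nbhd y b" "v' \<in> nbhd y b"
  shows "card {u \<in> nbhd y a. (u, v) \<in> R e} = card {u \<in> nbhd y a. (u, v') \<in> R e}"
  using card_paths_eq[of a e b y v y v'] assms by (simp add: nbhd_def)

lemma rel_of_square:
  assumes "a \<le> d" "b \<le> d" "nbhd y a = {u1, u2}" "u1 \<noteq> u2" "nbhd y b = {v1, v2}" "v1 \<noteq> v2"
  shows "rel_of (u2, v2) = rel_of (u1, v1)" "rel_of (u2, v1) = rel_of (u1, v2)"
proof -
  have square: "((u1, v1) \<in> R e \<longleftrightarrow> (u2, v2) \<in> R e) \<and> ((u1, v2) \<in> R e \<longleftrightarrow> (u2, v1) \<in> R e)"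
    if "e \<le> d" for e
  proof -
    have "card {v \<in> nbhd y b. (u1, v) \<in> R e} = card {v \<in> nbhd y b. (u2, v) \<in> R e}"
      by (rule card_nbhd_row_eq[OF assms(1,2) that]) (use assms(3) in auto)
    moreover have "card {u \<in> nbhd y a. (u, v1) \<in> R e} = card {u \<in> nbhd y a. (u, v2) \<in> R e}"
      by (rule card_nbhd_col_eq[OF assms(1,2) that]) (use assms(5) in auto)
    ultimately show ?thesis
      unfolding assms(3,5) card_doubleton_filter[OF assms(4)] card_doubleton_filter[OF assms(6)]
      by (auto simp: of_bool_def split: if_splits)
  qed
  have "(u2, v2) \<in> R (rel_of (u1, v1))" "(u2, v1) \<in> R (rel_of (u1, v2))"
    using square[OF rel_of(1), of "(u1, v1)"] square[OF rel_of(1), of "(u1, v2)"] rel_of(2) by simp_all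
  then show "rel_of (u2, v2) = rel_of (u1, v1)" "rel_of (u2, v1) = rel_of (u1, v2)"
    by (simp_all add: in_rel_iff[OF rel_of(1)])
qed

lemma rel_of_eq_if_nbhd_singleton_left:
  assumes "a \<le> d" "b \<le> d" "nbhd y a = {u}" "v \<in> nbhd y b" "v' \<in> nbhd y b"
  shows "rel_of (u, v) = rel_of (u, v')"
proof -
  have "card {w \<in> nbhd y a. (w, v) \<in> R (rel_of (u, v))} = card {w \<in> nbhd y a. (w, v') \<in> R (rel_of (u, v))}"
    using card_nbhd_col_eq[OF assms(1,2) rel_of(1) assms(4,5)] .
  moreover have "{w \<in> nbhd y a. (w, v) \<in> R (rel_of (u, v))} = {u}"
    using assms(3) rel_of(2) by auto
  ultimately have "card {w \<in> nbhd y a. (w, v') \<in> R (rel_of (u, v))} = 1" by simp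
  then have "{w \<in> nbhd y a. (w, v') \<in> R (rel_of (u, v))} \<noteq> {}" by (intro notI) simp
  then have "(u, v') \<in> R (rel_of (u, v))" using assms(3) by auto
  then show ?thesis using in_rel_iff[OF rel_of(1)] by simp
qed

lemma rel_of_eq_if_nbhd_singleton_right:
  assumes "a \<le> d" "b \<le> d" "nbhd y b = {v}" "u \<in> nbhd y a" "u' \<in> nbhd y a"
  shows "rel_of (u, v) = rel_of (u', v)"
proof -
  have "card {w \<in> nbhd y b. (u, w) \<in> R (rel_of (u, v))} = card {w \<in> nbhd y b. (u', w) \<in> R (rel_of (u, v))}"
    using card_nbhd_row_eq[OF assms(1,2) rel_of(1) assms(4,5)] .
  moreover have "{w \<in> nbhd y b. (u, w) \<in> R (rel_of (u, v))} = {v}"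
    using assms(3) rel_of(2) by auto
  ultimately have "card {w \<in> nbhd y b. (u', w) \<in> R (rel_of (u, v))} = 1" by simp
  then have "{w \<in> nbhd y b. (u', w) \<in> R (rel_of (u, v))} \<noteq> {}" by (intro notI) simp
  then have "(u', v) \<in> R (rel_of (u, v))" using assms(3) by auto
  then show ?thesis using in_rel_iff[OF rel_of(1)] by simp
qed

lemma cprod_conv_eq:
  assumes a: "a \<le> d" and b: "b \<le> d"
  shows "cprod d R (conv_idx d R a) b = rel_of ` (nbhd y a \<times> nbhd y b)"
proof (intro set_eqI iffI)
  fix e assume "e \<in> cprod d R (conv_idx d R a) b"
  then have e: "e \<le> d" "inum R (conv_idx d R a) b e > 0" by (auto simp: cprod_def)
  obtain m n where mn: "(m, n) \<in> R e" using rel_nonempty[OF e(1)] by auto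
  have "{l. (m, l) \<in> R (conv_idx d R a) \<and> (l, n) \<in> R b} \<noteq> {}"
    using e(2) inum_eq[OF conv_idx(1)[OF a] b e(1) mn] by (auto simp: card_gt_0_iff)
  then obtain l where l: "(l, m) \<in> R a" "(l, n) \<in> R b" using conv_idx(2)[OF a] by auto
  obtain v where v: "v \<in> nbhd y b" using nbhd_nonempty[OF b] by blast
  have "card {w. (y, w) \<in> R a \<and> (w, v) \<in> R e} = card {w. (l, w) \<in> R a \<and> (w, n) \<in> R e}"
    using card_paths_eq[OF a e(1) b _ l(2)] v by (simp add: nbhd_def)
  also have "\<dots> \<noteq> 0" using l mn by (auto simp: card_eq_0_iff)
  finally obtain u where "(y, u) \<in> R a" "(u, v) \<in> R e" by (auto simp: card_eq_0_iff)
  moreover from this have "e = rel_of (u, v)" using in_rel_iff[OF e(1)] by simp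
  ultimately show "e \<in> rel_of ` (nbhd y a \<times> nbhd y b)"
    using v by (auto simp: nbhd_def)
next
  fix e assume "e \<in> rel_of ` (nbhd y a \<times> nbhd y b)"
  then obtain u v where uv: "(y, u) \<in> R a" "(y, v) \<in> R b" "e = rel_of (u, v)"
    by (auto simp: nbhd_def)
  have "y \<in> {l. (u, l) \<in> R (conv_idx d R a) \<and> (l, v) \<in> R b}"
    using uv conv_idx(2)[OF a] by simp
  moreover have "inum R (conv_idx d R a) b e = card {l. (u, l) \<in> R (conv_idx d R a) \<and> (l, v) \<in> R b}"
    unfolding uv(3) by (rule inum_eq[OF conv_idx(1)[OF a] b rel_of])
  ultimately have "inum R (conv_idx d R a) b e > 0" by (auto simp: card_gt_0_iff)
  then show "e \<in> cprod d R (conv_idx d R a) b" using rel_of(1) uv(3) by (simp add: cprod_def)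
qed

lemma cprod_conv_doubletons:
  assumes "a \<le> d" "b \<le> d" "nbhd y a = {u1, u2}" "u1 \<noteq> u2" "nbhd y b = {v1, v2}" "v1 \<noteq> v2"
  shows "cprod d R (conv_idx d R a) b = {rel_of (u1, v1), rel_of (u1, v2)}"
proof -
  have "nbhd y a \<times> nbhd y b = {(u1, v1), (u1, v2), (u2, v1), (u2, v2)}"
    using assms(3,5) by auto
  then show ?thesis
    using cprod_conv_eq[OF assms(1,2), of y] rel_of_square[OF assms] by auto
qed

lemma rel_of_eq_if_card_cprod_1:
  assumes "a \<le> d" "b \<le> d" "card (cprod d R (conv_idx d R a) b) = 1"
    and "u \<in> nbhd y a" "v \<in> nbhd y b" "u' \<in> nbhd y a" "v' \<in> nbhd y b"
  shows "rel_of (u, v) = rel_of (u', v')"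
proof -
  have "card (rel_of ` (nbhd y a \<times> nbhd y b)) = 1"
    using assms(3) cprod_conv_eq[OF assms(1,2), of y] by simp
  then obtain e where e: "rel_of ` (nbhd y a \<times> nbhd y b) = {e}" by (rule card_1_singletonE)
  have "rel_of p = e" if "p \<in> nbhd y a \<times> nbhd y b" for p
    using e that by (metis image_eqI singletonD)
  then show ?thesis using assms(4-) by simp
qed

lemma inum_0_self: "v \<le> d \<Longrightarrow> inum R v 0 v = 1"
proof -
  assume v: "v \<le> d"
  obtain m n where mn: "(m, n) \<in> R v" using rel_nonempty[OF v] by auto
  then have "{l. (m, l) \<in> R v \<and> (l, n) \<in> R 0} = {n}" by (auto simp: in_rel_0_iff)
  then show ?thesis using inum_eq[OF v _ v mn] by simp
qed

lemma sum_adj_eq_allones: "(\<Sum>c\<le>d. adj R c) = (allones :: 'a \<Rightarrow> 'a \<Rightarrow> 'f::field)"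
proof (intro ext)
  fix u v
  have "(\<Sum>c\<le>d. adj R c :: 'a \<Rightarrow> 'a \<Rightarrow> 'f) u v = (\<Sum>c\<le>d. if c = rel_of (u, v) then 1 else 0)"
    unfolding sum_fun_apply by (rule sum.cong) (auto simp: adj_def in_rel_iff)
  then show "(\<Sum>c\<le>d. adj R c :: 'a \<Rightarrow> 'a \<Rightarrow> 'f) u v = allones u v"
    using rel_of(1) by (simp add: allones_def)
qed

definition link :: "(nat \<times> nat) set" where
  "link = {(i, l). i \<le> d \<and> l \<le> d \<and> valency d R i = 2 \<and> valency d R l = 2 \<and>
                   (\<exists>j\<le>d. inum R i j l = 1)}"

definition link_chain :: "nat \<Rightarrow> nat \<Rightarrow> bool" where
  "link_chain u v \<longleftrightarrow> (\<exists>(a::nat) (ii::nat \<Rightarrow> nat) (jj::nat \<Rightarrow> nat) (ll::nat \<Rightarrow> nat). a \<ge> 1 \<and>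
     (\<forall>b\<le>a. ii b \<le> d \<and> jj b \<le> d \<and> ll b \<le> d) \<and>
     ii 0 = u \<and> ll a = v \<and>
     (\<forall>b\<le>a. valency d R (ii b) = 2 \<and> valency d R (ll b) = 2 \<and> inum R (ii b) (jj b) (ll b) = 1) \<and>
     (\<forall>c<a. ll c = ii (Suc c)))"

lemma bad_pair_iff_link_chain:
  "bad_pair d R u v \<longleftrightarrow> link_chain u v \<and> card (cprod d R (conv_idx d R u) v) = 1"
  unfolding bad_pair_def link_chain_def by (rule refl)

lemma link_chain_imp_trancl:
  assumes "link_chain u v"
  shows "(u, v) \<in> link\<^sup>+"
proof -
  obtain a ii jj ll where bounds: "\<forall>b\<le>a. ii b \<le> d \<and> jj b \<le> d \<and> ll b \<le> d"
    and ends: "ii 0 = u" "ll a = v"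
    and steps: "\<forall>b\<le>a. valency d R (ii b) = 2 \<and> valency d R (ll b) = 2 \<and> inum R (ii b) (jj b) (ll b) = 1"
    and glue: "\<forall>c<a. ll c = ii (Suc c)"
    using assms unfolding link_chain_def by blast
  have link: "(ii b, ll b) \<in> link" if "b \<le> a" for b
    using bounds steps that unfolding link_def by blast
  have "(ii 0, ll b) \<in> link\<^sup>+" if "b \<le> a" for b
    using that
  proof (induction b)
    case 0
    then show ?case using link by blast
  next
    case (Suc b)
    then have "(ii 0, ii (Suc b)) \<in> link\<^sup>+" using glue by simp
    then show ?case using link[OF Suc.prems] by (rule trancl_into_trancl)
  qed
  then show ?thesis using ends by blast
qed

lemma trancl_imp_link_chain:
  assumes "(u, v) \<in> link\<^sup>+"
  shows "link_chain u v"
  using assms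
proof (induction rule: trancl_induct)
  case (base v)
  then obtain j where j: "u \<le> d" "v \<le> d" "valency d R u = 2" "valency d R v = 2" "j \<le> d"
    "inum R u j v = 1"
    unfolding link_def by blast
  show ?case
    unfolding link_chain_def
    by (rule exI[of _ 1], rule exI[of _ "\<lambda>b. if b = 0 then u else v"],
        rule exI[of _ "\<lambda>b. if b = 0 then j else 0"], rule exI[of _ "\<lambda>b. v"])
      (use j inum_0_self in \<open>auto simp: le_Suc_eq\<close>)
next
  case (step w z)
  from step.hyps(2) obtain j where j: "w \<le> d" "z \<le> d" "valency d R w = 2" "valency d R z = 2"
    "j \<le> d" "inum R w j z = 1"
    unfolding link_def by blast
  from step.IH obtain a ii jj ll where "a \<ge> 1" "\<forall>b\<le>a. ii b \<le> d \<and> jj b \<le> d \<and> ll b \<le> d"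
    "ii 0 = u" "ll a = w"
    "\<forall>b\<le>a. valency d R (ii b) = 2 \<and> valency d R (ll b) = 2 \<and> inum R (ii b) (jj b) (ll b) = 1"
    "\<forall>c<a. ll c = ii (Suc c)"
    unfolding link_chain_def by blast
  then show ?case
    unfolding link_chain_def
    by (intro exI[of _ "Suc a"] exI[of _ "ii(Suc a := w)"] exI[of _ "jj(Suc a := j)"]
        exI[of _ "ll(Suc a := z)"])
      (use j in \<open>auto simp: le_Suc_eq less_Suc_eq\<close>)
qed

lemma link_chain_iff_trancl: "link_chain u v \<longleftrightarrow> (u, v) \<in> link\<^sup>+"
  using link_chain_imp_trancl trancl_imp_link_chain by blast

lemma nbhd_doubleton:
  assumes "a \<le> d" "valency d R a = 2"
  obtains u1 u2 where "nbhd y a = {u1, u2}" "u1 \<noteq> u2"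
  using assms valency_eq_card_nbhd[OF assms(1), of y] by (auto simp: card_2_iff)

lemma card_cprod_conv_cases:
  assumes "a \<le> d" "b \<le> d" "valency d R a = 2" "valency d R b = 2"
  shows "card (cprod d R (conv_idx d R a) b) = 1 \<or> card (cprod d R (conv_idx d R a) b) = 2"
proof -
  fix y :: 'a
  obtain u1 u2 where "nbhd y a = {u1, u2}" "u1 \<noteq> u2" using nbhd_doubleton assms(1,3) .
  moreover obtain v1 v2 where "nbhd y b = {v1, v2}" "v1 \<noteq> v2" using nbhd_doubleton assms(2,4) .
  ultimately show ?thesis using cprod_conv_doubletons[OF assms(1,2)] by (simp add: card_insert_if)
qed

lemma link_if_card_cprod_2:
  assumes g: "g \<le> d" "valency d R g = 2" and h: "h \<le> d" "valency d R h = 2"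
    and card: "card (cprod d R (conv_idx d R g) h) = 2"
  shows "(g, h) \<in> link"
proof -
  fix y :: 'a
  obtain u1 u2 where U: "nbhd y g = {u1, u2}" "u1 \<noteq> u2" using nbhd_doubleton g .
  obtain v1 v2 where V: "nbhd y h = {v1, v2}" "v1 \<noteq> v2" using nbhd_doubleton h .
  define e where "e = rel_of (u1, v1)"
  have "rel_of (u1, v2) \<noteq> e"
    using card cprod_conv_doubletons[OF g(1) h(1) U V] unfolding e_def by auto
  then have "(u2, v1) \<notin> R e"
    using rel_of_square[OF g(1) h(1) U V] in_rel_iff[of e] rel_of(1) unfolding e_def by auto
  moreover have "(u1, v1) \<in> R e" using rel_of(2) unfolding e_def .
  moreover have "(y, v1) \<in> R h" using V by (auto simp: nbhd_def)
  then have "inum R g e h = card {l \<in> nbhd y g. (l, v1) \<in> R e}"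
    using inum_eq[OF g(1) _ h(1)] rel_of(1) unfolding e_def by (simp add: nbhd_def)
  ultimately have "inum R g e h = 1" unfolding U(1) card_doubleton_filter[OF U(2)] by simp
  then show ?thesis using g h rel_of(1) unfolding link_def e_def by blast
qed

lemma trancl_link_valency:
  assumes "(a, b) \<in> link\<^sup>+"
  shows "a \<le> d" "b \<le> d" "valency d R a = 2" "valency d R b = 2"
proof -
  have "a \<in> Domain link" "b \<in> Range link"
    using assms by (metis Domain.DomainI trancl_domain, metis Range.intros trancl_range)
  then show "a \<le> d" "b \<le> d" "valency d R a = 2" "valency d R b = 2"
    unfolding link_def by auto
qed

lemma calU_eq_trancl_link: "calU d R = link\<^sup>+"
proof (intro subset_antisym subrelI)
  fix g h assume "(g, h) \<in> calU d R"
  then have "g \<le> d" "h \<le> d" and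
    "(valency d R g = 2 \<and> valency d R h = 2 \<and> card (cprod d R (conv_idx d R g) h) = 2)
      \<or> bad_pair d R g h"
    unfolding calU_def by auto
  then show "(g, h) \<in> link\<^sup>+"
    using link_if_card_cprod_2 bad_pair_iff_link_chain link_chain_iff_trancl by blast
next
  fix g h assume gh: "(g, h) \<in> link\<^sup>+"
  note valency = trancl_link_valency[OF gh]
  show "(g, h) \<in> calU d R"
    using card_cprod_conv_cases[OF valency(1,2,3,4)] gh valency
    unfolding calU_def bad_pair_iff_link_chain link_chain_iff_trancl by auto
qed

lemma calU_valency:
  assumes "(a, b) \<in> calU d R"
  shows "a \<le> d" "b \<le> d" "valency d R a = 2" "valency d R b = 2"
  using trancl_link_valency[of a b] assms unfolding calU_eq_trancl_link by auto

lemma calU_trans: "(a, b) \<in> calU d R \<Longrightarrow> (b, c) \<in> calU d R \<Longrightarrow> (a, c) \<in> calU d R"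
  unfolding calU_eq_trancl_link by (rule trancl_trans)

lemma rel_of_eq_if_not_calU:
  assumes "a \<le> d" "b \<le> d" "valency d R a = 2" "valency d R b = 2" "(a, b) \<notin> calU d R"
    and "u \<in> nbhd y a" "v \<in> nbhd y b" "u' \<in> nbhd y a" "v' \<in> nbhd y b"
  shows "rel_of (u, v) = rel_of (u', v')"
proof (rule rel_of_eq_if_card_cprod_1[OF assms(1,2) _ assms(6-)])
  show "card (cprod d R (conv_idx d R a) b) = 1"
    using card_cprod_conv_cases[OF assms(1-4)] assms unfolding calU_def by auto
qed

end

section \<open>Patterns of pairs in a quasi-thin scheme\<close>

locale ordered_quasi_thin_scheme = scheme d R
  for d :: nat and R :: "nat \<Rightarrow> ('a::finite \<times> 'a) set" +
  fixes x :: 'a and r :: "'a rel"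
  assumes quasi_thin: "quasi_thin d R" and linear: "linear_order_on UNIV r"
begin

abbreviation cls :: "'a \<Rightarrow> nat" where
  "cls z \<equiv> rel_of (x, z)"

definition lo :: "nat \<Rightarrow> 'a" where
  "lo a = rmin r (nbhd x a)"

definition hi :: "nat \<Rightarrow> 'a" where
  "hi a = rmax r (nbhd x a)"

lemma cls: "cls z \<le> d" "z \<in> nbhd x (cls z)"
  using rel_of by (auto simp: nbhd_def)

lemma cls_eq: "a \<le> d \<Longrightarrow> z \<in> nbhd x a \<Longrightarrow> cls z = a"
  using in_rel_iff by (simp add: nbhd_def)

lemma nbhd_cases:
  assumes "a \<le> d"
  obtains (single) "nbhd x a = {lo a}" "hi a = lo a"
    | (double) "nbhd x a = {lo a, hi a}" "lo a \<noteq> hi a" "valency d R a = 2"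
proof -
  have "card (nbhd x a) \<le> 2"
    using quasi_thin assms valency_eq_card_nbhd[OF assms] by (simp add: quasi_thin_def)
  moreover have "card (nbhd x a) \<noteq> 0" using nbhd_nonempty[OF assms] by simp
  ultimately consider "card (nbhd x a) = 1" | "card (nbhd x a) = 2" by linarith
  then show thesis
  proof cases
    case 1
    then obtain u where "nbhd x a = {u}" by (rule card_1_singletonE)
    then show thesis using single rmin_rmax_singleton[OF linear] by (simp add: lo_def hi_def)
  next
    case 2
    then show thesis using double rmin_rmax_doubleton[OF linear] valency_eq_card_nbhd[OF assms]
      by (simp add: lo_def hi_def)
  qed
qed

lemma nbhd_if_valency_2:
  assumes "a \<le> d" "valency d R a = 2"
  shows "nbhd x a = {lo a, hi a}" "lo a \<noteq> hi a"
  using assms valency_eq_card_nbhd[OF assms(1), of x] by (cases rule: nbhd_cases; simp)+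

lemma lo_hi_in_nbhd:
  assumes "a \<le> d"
  shows "lo a \<in> nbhd x a" "hi a \<in> nbhd x a"
  using assms by (cases rule: nbhd_cases; simp)+

lemma cls_lo_hi:
  assumes "a \<le> d"
  shows "cls (lo a) = a" "cls (hi a) = a"
  using cls_eq[OF assms] lo_hi_in_nbhd[OF assms] by simp_all

definition is_lo :: "'a \<Rightarrow> bool" where
  "is_lo z \<longleftrightarrow> z = lo (cls z)"

definition partner :: "'a \<Rightarrow> 'a" where
  "partner z = (if is_lo z then hi (cls z) else lo (cls z))"

lemma is_lo_iff: "a \<le> d \<Longrightarrow> z \<in> nbhd x a \<Longrightarrow> is_lo z \<longleftrightarrow> z = lo a"
  using cls_eq by (simp add: is_lo_def)

lemma is_lo_lo: "a \<le> d \<Longrightarrow> is_lo (lo a)"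
  using cls_lo_hi by (simp add: is_lo_def)

lemma not_is_lo_hi: "a \<le> d \<Longrightarrow> valency d R a = 2 \<Longrightarrow> \<not> is_lo (hi a)"
  using cls_lo_hi nbhd_if_valency_2 by (metis is_lo_def)

lemma cls_partner: "cls (partner z) = cls z"
  using cls_lo_hi[OF cls(1)[of z]] by (simp add: partner_def)

lemma partner_partner: "partner (partner z) = z"
  using cls(2)[of z] cls_lo_hi[OF cls(1)[of z]]
  by (cases rule: nbhd_cases[OF cls(1)[of z]]) (auto simp: partner_def is_lo_def)

lemma is_lo_partner: "valency d R (cls z) = 2 \<Longrightarrow> is_lo (partner z) \<longleftrightarrow> \<not> is_lo z"
  using nbhd_if_valency_2[OF cls(1)[of z]] cls_lo_hi[OF cls(1)[of z]]
  by (auto simp: partner_def is_lo_def)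

lemma rel_of_doubleton_block:
  assumes "a \<le> d" "b \<le> d" "valency d R a = 2" "valency d R b = 2"
    and "u \<in> nbhd x a" "v \<in> nbhd x b"
  shows "rel_of (u, v) = (if is_lo u = is_lo v then rel_of (lo a, lo b) else rel_of (lo a, hi b))"
proof -
  note A = nbhd_if_valency_2[OF assms(1,3)] and B = nbhd_if_valency_2[OF assms(2,4)]
  have "u = lo a \<or> u = hi a" "v = lo b \<or> v = hi b" using assms(5,6) A(1) B(1) by auto
  then show ?thesis
    using rel_of_square[OF assms(1,2) A B] A(2) B(2) is_lo_iff[OF assms(1,5)] is_lo_iff[OF assms(2,6)]
    by (elim disjE) simp_all
qed

definition same_pattern :: "'a \<Rightarrow> 'a \<Rightarrow> 'a \<Rightarrow> 'a \<Rightarrow> bool" where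
  "same_pattern u v u' v' \<longleftrightarrow> cls u = cls u' \<and> cls v = cls v' \<and>
     ((cls u, cls v) \<in> calU d R \<longrightarrow> (is_lo u \<longleftrightarrow> is_lo v) = (is_lo u' \<longleftrightarrow> is_lo v'))"

definition pattern_constant :: "('a \<Rightarrow> 'a \<Rightarrow> 'f) \<Rightarrow> bool" where
  "pattern_constant M \<longleftrightarrow> (\<forall>u v u' v'. same_pattern u v u' v' \<longrightarrow> M u v = M u' v')"

lemma same_pattern_rel_of:
  assumes same: "same_pattern u v u' v'"
  shows "rel_of (u, v) = rel_of (u', v')"
proof -
  define a b where "a = cls u" and "b = cls v"
  have a: "a \<le> d" "u \<in> nbhd x a" "u' \<in> nbhd x a" and b: "b \<le> d" "v \<in> nbhd x b" "v' \<in> nbhd x b"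
    using same cls unfolding a_def b_def same_pattern_def by metis+
  consider (single_a) "nbhd x a = {lo a}" | (single_b) "nbhd x b = {lo b}"
    | (double) "valency d R a = 2" "valency d R b = 2"
    using nbhd_cases[OF a(1)] nbhd_cases[OF b(1)] by metis
  then show ?thesis
  proof cases
    case single_a
    then have "u = lo a" "u' = lo a" using a by auto
    then show ?thesis using rel_of_eq_if_nbhd_singleton_left[OF a(1) b(1) single_a b(2,3)] by simp
  next
    case single_b
    then have "v = lo b" "v' = lo b" using b by auto
    then show ?thesis using rel_of_eq_if_nbhd_singleton_right[OF a(1) b(1) single_b a(2,3)] by simp
  next
    case double
    show ?thesis
    proof (cases "(a, b) \<in> calU d R")
      case True
      then have "(is_lo u \<longleftrightarrow> is_lo v) \<longleftrightarrow> (is_lo u' \<longleftrightarrow> is_lo v')"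
        using same by (simp add: same_pattern_def a_def b_def)
      then show ?thesis using rel_of_doubleton_block[OF a(1) b(1) double] a b by simp
    next
      case False
      then show ?thesis by (rule rel_of_eq_if_not_calU[OF a(1) b(1) double _ a(2) b(2) a(3) b(3)])
    qed
  qed
qed

lemma pattern_constant_adj: "e \<le> d \<Longrightarrow> pattern_constant (adj R e)"
  using same_pattern_rel_of by (simp add: pattern_constant_def adj_def in_rel_iff)

lemma pattern_constant_dual_idem:
  assumes a: "a \<le> d"
  shows "pattern_constant (dual_idem R x a)"
  unfolding pattern_constant_def dual_idem_def
proof (intro allI impI)
  fix u v u' v'
  assume same: "same_pattern u v u' v'"
  have "rel_of (u, v) = 0 \<longleftrightarrow> u = v" "rel_of (u', v') = 0 \<longleftrightarrow> u' = v'"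
    using in_rel_iff[of 0] in_rel_0_iff by auto
  then have "u = v \<longleftrightarrow> u' = v'" using same_pattern_rel_of[OF same] by simp
  moreover have "(x, u) \<in> R a \<longleftrightarrow> (x, u') \<in> R a"
    using same in_rel_iff[OF a] by (simp add: same_pattern_def)
  ultimately show "(if u = v \<and> (x, u) \<in> R a then 1 else 0) = (if u' = v' \<and> (x, u') \<in> R a then 1 else 0)"
    by simp
qed

lemma pattern_constant_one: "pattern_constant (\<lambda>u v. if u = v then 1 else (0::'f::field))"
  using pattern_constant_adj[of 0] by (simp add: adj_def in_rel_0_iff)

lemma pattern_constant_add: "pattern_constant M \<Longrightarrow> pattern_constant N \<Longrightarrow> pattern_constant (M + N)"
  by (simp add: pattern_constant_def)

lemma pattern_constant_smult: "pattern_constant M \<Longrightarrow> pattern_constant (msmult c M)"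
  by (simp add: pattern_constant_def msmult_def)

text \<open>The bijection swaps v with its partner iff the parities of u, u' differ (if ([u], [v]) is
  in U), or else those of w, w' differ (if ([v], [w]) is in U); by transitivity of U the first rule
  also respects the pattern of (v, w).\<close>

lemma same_pattern_bijection:
  assumes same: "same_pattern u w u' w'"
  obtains \<sigma> where "\<And>v. \<sigma> (\<sigma> v) = v"
    "\<And>v. same_pattern u v u' (\<sigma> v)" "\<And>v. same_pattern v w (\<sigma> v) w'"
proof -
  define a c where "a = cls u" and "c = cls w"
  define flip where "flip b \<longleftrightarrow> (if (a, b) \<in> calU d R then is_lo u \<noteq> is_lo u'
    else (b, c) \<in> calU d R \<and> is_lo w \<noteq> is_lo w')" for b
  define \<sigma> where "\<sigma> v = (if flip (cls v) then partner v else v)" for v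
  have cls_\<sigma>: "cls (\<sigma> v) = cls v" for v
    by (simp add: \<sigma>_def cls_partner)
  have is_lo_\<sigma>: "is_lo (\<sigma> v) \<longleftrightarrow> is_lo v \<noteq> flip (cls v)" for v
  proof (cases "flip (cls v)")
    case True
    then have "valency d R (cls v) = 2"
      using calU_valency unfolding flip_def by (auto split: if_splits)
    then show ?thesis using True is_lo_partner by (simp add: \<sigma>_def)
  qed (simp add: \<sigma>_def)
  show thesis
  proof
    show "\<sigma> (\<sigma> v) = v" for v
      by (simp add: \<sigma>_def cls_partner partner_partner)
  next
    fix v
    show "same_pattern u v u' (\<sigma> v)"
      unfolding same_pattern_def
    proof (intro conjI impI)
      show "cls u = cls u'" using same by (simp add: same_pattern_def)
      show "cls v = cls (\<sigma> v)" by (simp add: cls_\<sigma>)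
      assume "(cls u, cls v) \<in> calU d R"
      then have "flip (cls v) \<longleftrightarrow> is_lo u \<noteq> is_lo u'" by (simp add: flip_def a_def)
      then show "(is_lo u \<longleftrightarrow> is_lo v) \<longleftrightarrow> (is_lo u' \<longleftrightarrow> is_lo (\<sigma> v))" using is_lo_\<sigma>[of v] by auto
    qed
  next
    fix v
    show "same_pattern v w (\<sigma> v) w'"
      unfolding same_pattern_def
    proof (intro conjI impI)
      show "cls v = cls (\<sigma> v)" by (simp add: cls_\<sigma>)
      show "cls w = cls w'" using same by (simp add: same_pattern_def)
      assume vc: "(cls v, cls w) \<in> calU d R"
      show "(is_lo v \<longleftrightarrow> is_lo w) \<longleftrightarrow> (is_lo (\<sigma> v) \<longleftrightarrow> is_lo w')"
      proof (cases "(a, cls v) \<in> calU d R")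
        case True
        then have "(a, c) \<in> calU d R" using vc calU_trans by (simp add: c_def)
        then have "(is_lo u \<longleftrightarrow> is_lo w) \<longleftrightarrow> (is_lo u' \<longleftrightarrow> is_lo w')"
          using same by (simp add: same_pattern_def a_def c_def)
        moreover have "flip (cls v) \<longleftrightarrow> is_lo u \<noteq> is_lo u'" using True by (simp add: flip_def)
        ultimately show ?thesis using is_lo_\<sigma>[of v] by auto
      next
        case False
        then have "flip (cls v) \<longleftrightarrow> is_lo w \<noteq> is_lo w'" using vc by (simp add: flip_def c_def)
        then show ?thesis using is_lo_\<sigma>[of v] by auto
      qed
    qed
  qed
qed

lemma pattern_constant_mmult:
  assumes M: "pattern_constant M" and N: "pattern_constant N"
  shows "pattern_constant (mmult M N)"
  unfolding pattern_constant_def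
proof (intro allI impI)
  fix u w u' w'
  assume "same_pattern u w u' w'"
  then obtain \<sigma> where \<sigma>: "\<And>v. \<sigma> (\<sigma> v) = v"
    and left: "\<And>v. same_pattern u v u' (\<sigma> v)" and right: "\<And>v. same_pattern v w (\<sigma> v) w'"
    using same_pattern_bijection by blast
  have "M u v = M u' (\<sigma> v)" "N v w = N (\<sigma> v) w'" for v
    using M N left right unfolding pattern_constant_def by blast+
  then have "mmult M N u w = (\<Sum>v\<in>UNIV. M u' (\<sigma> v) * N (\<sigma> v) w')"
    by (simp add: mmult_def)
  also have "\<dots> = mmult M N u' w'"
    unfolding mmult_def by (rule sum.reindex_bij_witness[of UNIV \<sigma> \<sigma>]) (auto simp: \<sigma>)
  finally show "mmult M N u w = mmult M N u' w'" .
qed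

lemma terwilliger_pattern_constant:
  "M \<in> terwilliger d R x \<Longrightarrow> pattern_constant M"
  unfolding terwilliger_def
proof (induction rule: gen_alg.induct)
  case (gen M)
  then show ?case using pattern_constant_adj pattern_constant_dual_idem by blast
next
  case (one M)
  then show ?case using pattern_constant_one by simp
next
  case (add M N)
  then show ?case using pattern_constant_add by blast
next
  case (smult M c)
  then show ?case using pattern_constant_smult by blast
next
  case (mult M N)
  then show ?case using pattern_constant_mmult by blast
qed

section \<open>The basis of the Terwilliger algebra\<close>

lemma terwilliger_adj: "e \<le> d \<Longrightarrow> adj R e \<in> terwilliger d R x"
  unfolding terwilliger_def by (rule gen_alg.gen) blast

lemma terwilliger_dual_idem: "a \<le> d \<Longrightarrow> dual_idem R x a \<in> terwilliger d R x"
  unfolding terwilliger_def by (rule gen_alg.gen) blast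

lemma terwilliger_mmult:
  "M \<in> terwilliger d R x \<Longrightarrow> N \<in> terwilliger d R x \<Longrightarrow> mmult M N \<in> terwilliger d R x"
  unfolding terwilliger_def by (rule gen_alg.mult)

lemma terwilliger_diff:
  "M \<in> terwilliger d R x \<Longrightarrow> N \<in> terwilliger d R x \<Longrightarrow> M - N \<in> terwilliger d R x"
  unfolding terwilliger_def by (rule gen_alg_diff)

lemma allones_in_terwilliger: "allones \<in> terwilliger d R x"
  unfolding sum_adj_eq_allones[symmetric] terwilliger_def
  by (rule gen_alg_sum) (use terwilliger_adj in \<open>auto simp: terwilliger_def\<close>)

definition block :: "nat \<Rightarrow> nat \<Rightarrow> ('a \<Rightarrow> 'a \<Rightarrow> 'f::field) \<Rightarrow> 'a \<Rightarrow> 'a \<Rightarrow> 'f" where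
  "block a b M = mmult (mmult (dual_idem R x a) M) (dual_idem R x b)"

lemma block_apply:
  "a \<le> d \<Longrightarrow> b \<le> d \<Longrightarrow> block a b M u v = (if cls u = a \<and> cls v = b then M u v else 0)"
  by (simp add: block_def mmult_dual_idem_left mmult_dual_idem_right in_rel_iff)

lemma block_in_terwilliger:
  "a \<le> d \<Longrightarrow> b \<le> d \<Longrightarrow> M \<in> terwilliger d R x \<Longrightarrow> block a b M \<in> terwilliger d R x"
  unfolding block_def by (intro terwilliger_mmult terwilliger_dual_idem)

lemma sum_blocks: "(\<Sum>a\<le>d. \<Sum>b\<le>d. block a b M) = M"
proof (intro ext)
  fix u v
  have "(\<Sum>a\<le>d. \<Sum>b\<le>d. block a b M) u v =
      (\<Sum>a\<le>d. if a = cls u then \<Sum>b\<le>d. if b = cls v then M u v else 0 else 0)"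
    unfolding sum_fun_apply by (intro sum.cong refl) (auto simp: block_apply)
  also have "\<dots> = M u v" using cls(1)[of u] cls(1)[of v] by simp
  finally show "(\<Sum>a\<le>d. \<Sum>b\<le>d. block a b M) u v = M u v" .
qed

lemma Bmat_eq: "Bmat r R x i j = munit (lo i) (lo j) + munit (hi i) (hi j)"
  by (simp add: Bmat_def lo_def hi_def nbhd_def)

lemma Bmat_apply:
  assumes "a \<le> d" "b \<le> d" "valency d R a = 2" "valency d R b = 2"
  shows "Bmat r R x a b u v = (if cls u = a \<and> cls v = b \<and> (is_lo u \<longleftrightarrow> is_lo v) then 1 else 0)"
proof -
  have "cls u = a \<and> \<not> is_lo u \<longleftrightarrow> u = hi a" "cls v = b \<and> \<not> is_lo v \<longleftrightarrow> v = hi b"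
    using cls[of u] cls[of v] nbhd_if_valency_2[OF assms(1,3)] nbhd_if_valency_2[OF assms(2,4)]
      cls_lo_hi[OF assms(1)] cls_lo_hi[OF assms(2)]
    by (auto simp: is_lo_def)
  then show ?thesis
    using nbhd_if_valency_2[OF assms(1,3)] cls_lo_hi[OF assms(1)] cls_lo_hi[OF assms(2)]
    by (auto simp: Bmat_eq munit_def is_lo_def)
qed

lemma Bmat_mmult:
  assumes "b \<le> d" "valency d R b = 2"
  shows "mmult (Bmat r R x a b) (Bmat r R x b c) = Bmat r R x a c"
  using nbhd_if_valency_2[OF assms]
  by (simp add: Bmat_eq mmult_add_left mmult_add_right mmult_munit)

lemma block_adj:
  assumes a: "a \<le> d" "valency d R a = 2" and b: "b \<le> d" "valency d R b = 2" and e: "e \<le> d"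
  shows "block a b (adj R e) =
    (if rel_of (lo a, lo b) = e then Bmat r R x a b else 0) +
    (if rel_of (lo a, hi b) = e then block a b allones - Bmat r R x a b else 0)"
proof (intro ext)
  fix u v
  show "block a b (adj R e) u v = ((if rel_of (lo a, lo b) = e then Bmat r R x a b else 0) +
    (if rel_of (lo a, hi b) = e then block a b allones - Bmat r R x a b else 0)) u v"
  proof (cases "cls u = a \<and> cls v = b")
    case True
    then have "u \<in> nbhd x a" "v \<in> nbhd x b" using cls(2) by metis+
    then have "rel_of (u, v) = (if is_lo u = is_lo v then rel_of (lo a, lo b) else rel_of (lo a, hi b))"
      by (rule rel_of_doubleton_block[OF a(1) b(1) a(2) b(2)])
    then show ?thesis
      using True by (simp add: block_apply a(1) b(1) Bmat_apply a b adj_def in_rel_iff[OF e] allones_def)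
  qed (auto simp: block_apply a(1) b(1) Bmat_apply a b)
qed

lemma link_separating_relation:
  assumes "(a, b) \<in> link"
  obtains j where "j \<le> d" "rel_of (lo a, lo b) = j \<longleftrightarrow> rel_of (lo a, hi b) \<noteq> j"
proof -
  obtain j where a: "a \<le> d" "valency d R a = 2" and b: "b \<le> d" "valency d R b = 2"
    and j: "j \<le> d" "inum R a j b = 1"
    using assms unfolding link_def by blast
  note A = nbhd_if_valency_2[OF a] and B = nbhd_if_valency_2[OF b]
  have "(x, lo b) \<in> R b" using B(1) by (auto simp: nbhd_def)
  then have "1 = card {l \<in> nbhd x a. (l, lo b) \<in> R j}"
    using j(2) inum_eq[OF a(1) j(1) b(1)] by (simp add: nbhd_def)
  also have "\<dots> = of_bool ((lo a, lo b) \<in> R j) + of_bool ((hi a, lo b) \<in> R j)"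
    unfolding A(1) by (rule card_doubleton_filter[OF A(2)])
  finally have "(lo a, lo b) \<in> R j \<longleftrightarrow> (hi a, lo b) \<notin> R j"
    by (cases "(lo a, lo b) \<in> R j"; cases "(hi a, lo b) \<in> R j") simp_all
  then show thesis
    using that[OF j(1)] rel_of_square(2)[OF a(1) b(1) A B] in_rel_iff[OF j(1)] by simp
qed

lemma Bmat_in_terwilliger_if_link:
  assumes "(a, b) \<in> link"
  shows "(Bmat r R x a b :: 'a \<Rightarrow> 'a \<Rightarrow> 'f::field) \<in> terwilliger d R x"
proof -
  have a: "a \<le> d" "valency d R a = 2" and b: "b \<le> d" "valency d R b = 2"
    using assms unfolding link_def by auto
  obtain j where j: "j \<le> d" "rel_of (lo a, lo b) = j \<longleftrightarrow> rel_of (lo a, hi b) \<noteq> j"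
    using assms by (rule link_separating_relation)
  have adj: "block a b (adj R j :: 'a \<Rightarrow> 'a \<Rightarrow> 'f) \<in> terwilliger d R x"
    using block_in_terwilliger[OF a(1) b(1) terwilliger_adj[OF j(1)]] .
  show ?thesis
  proof (cases "rel_of (lo a, lo b) = j")
    case True
    then have "block a b (adj R j) = (Bmat r R x a b :: 'a \<Rightarrow> 'a \<Rightarrow> 'f)"
      using j block_adj[OF a b j(1)] by simp
    then show ?thesis using adj by simp
  next
    case False
    then have "block a b (adj R j) = block a b allones - (Bmat r R x a b :: 'a \<Rightarrow> 'a \<Rightarrow> 'f)"
      using j block_adj[OF a b j(1)] by simp
    then have "(Bmat r R x a b :: 'a \<Rightarrow> 'a \<Rightarrow> 'f) = block a b allones - block a b (adj R j)"
      by simp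
    moreover have "block a b (allones :: 'a \<Rightarrow> 'a \<Rightarrow> 'f) \<in> terwilliger d R x"
      by (rule block_in_terwilliger[OF a(1) b(1) allones_in_terwilliger])
    ultimately show ?thesis
      using terwilliger_diff adj by simp
  qed
qed

lemma Bmat_in_terwilliger:
  assumes "(a, b) \<in> calU d R"
  shows "(Bmat r R x a b :: 'a \<Rightarrow> 'a \<Rightarrow> 'f::field) \<in> terwilliger d R x"
  using assms unfolding calU_eq_trancl_link
proof (induction rule: trancl_induct)
  case (base b)
  then show ?case by (rule Bmat_in_terwilliger_if_link)
next
  case (step b c)
  then have "b \<le> d" "valency d R b = 2" unfolding link_def by auto
  then have "(Bmat r R x a c :: 'a \<Rightarrow> 'a \<Rightarrow> 'f) = mmult (Bmat r R x a b) (Bmat r R x b c)"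
    by (simp add: Bmat_mmult)
  then show ?case
    using terwilliger_mmult[OF step.IH Bmat_in_terwilliger_if_link[OF step.hyps(2)]] by simp
qed

definition basis :: "('a \<Rightarrow> 'a \<Rightarrow> 'f::field) set" where
  "basis = {Bmat r R x i j | i j. (i, j) \<in> calU d R} \<union> {block a b allones | a b. a \<le> d \<and> b \<le> d}"

lemma span_basis_subset: "module.span msmult basis \<subseteq> terwilliger d R x"
proof (rule module.span_minimal[OF msmult_module])
  show "basis \<subseteq> terwilliger d R x"
    unfolding basis_def
    using Bmat_in_terwilliger block_in_terwilliger allones_in_terwilliger by blast
  show "module.subspace msmult (terwilliger d R x)"
    unfolding terwilliger_def by (rule subspace_gen_alg)
qed

lemma pattern_constant_in_span:
  assumes M: "pattern_constant (M :: 'a \<Rightarrow> 'a \<Rightarrow> 'f::field)"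
  shows "M \<in> module.span msmult basis"
proof -
  interpret module "msmult :: 'f \<Rightarrow> ('a \<Rightarrow> 'a \<Rightarrow> 'f) \<Rightarrow> _" by (rule msmult_module)
  have J: "block a b allones \<in> span basis" if "a \<le> d" "b \<le> d" for a b
    by (rule span_base) (use that in \<open>auto simp: basis_def\<close>)
  have "block a b M \<in> span basis" if ab: "a \<le> d" "b \<le> d" for a b
  proof (cases "(a, b) \<in> calU d R")
    case True
    note va = calU_valency(3)[OF True] and vb = calU_valency(4)[OF True]
    have "block a b M = msmult (M (lo a) (lo b)) (Bmat r R x a b) +
        msmult (M (lo a) (hi b)) (block a b allones - Bmat r R x a b)"
    proof (intro ext)
      fix u v
      have "M u v = (if is_lo u = is_lo v then M (lo a) (lo b) else M (lo a) (hi b))"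
        if "cls u = a" "cls v = b"
        using M True that cls_lo_hi[OF ab(1)] cls_lo_hi[OF ab(2)] is_lo_lo[OF ab(1)]
          is_lo_lo[OF ab(2)] not_is_lo_hi[OF ab(2) vb]
        unfolding pattern_constant_def same_pattern_def by auto
      then show "block a b M u v = (msmult (M (lo a) (lo b)) (Bmat r R x a b) +
          msmult (M (lo a) (hi b)) (block a b allones - Bmat r R x a b)) u v"
        by (simp add: block_apply ab Bmat_apply ab va vb msmult_def allones_def)
    qed
    moreover have "Bmat r R x a b \<in> span basis"
      by (rule span_base) (use True in \<open>auto simp: basis_def\<close>)
    ultimately show ?thesis using J[OF ab] by (simp add: span_add span_scale span_diff)
  next
    case False
    have "block a b M = msmult (M (lo a) (lo b)) (block a b allones)"
    proof (intro ext)
      fix u v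
      have "M u v = M (lo a) (lo b)" if "cls u = a" "cls v = b"
        using M False that cls_lo_hi[OF ab(1)] cls_lo_hi[OF ab(2)]
        unfolding pattern_constant_def same_pattern_def by auto
      then show "block a b M u v = msmult (M (lo a) (lo b)) (block a b allones) u v"
        by (simp add: block_apply ab msmult_def allones_def)
    qed
    then show ?thesis using J[OF ab] by (simp add: span_scale)
  qed
  then have "(\<Sum>a\<le>d. \<Sum>b\<le>d. block a b M) \<in> span basis"
    by (intro span_sum) auto
  then show ?thesis unfolding sum_blocks .
qed

text \<open>B_ab is read off at (lo a, lo b), where only E*_a J E*_b competes with it; E*_a J E*_b is
  read off at (lo a, hi b) if (a, b) is in U and at (lo a, lo b) otherwise, where no other basis
  element is nonzero.\<close>

lemma basis_independent: "\<not> module.dependent msmult (basis :: ('a \<Rightarrow> 'a \<Rightarrow> 'f::field) set)"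
proof -
  define f :: "(nat \<times> nat) + (nat \<times> nat) \<Rightarrow> 'a \<Rightarrow> 'a \<Rightarrow> 'f" where
    "f = case_sum (\<lambda>(a, b). Bmat r R x a b) (\<lambda>(a, b). block a b allones)"
  define I where "I = Inl ` calU d R \<union> Inr ` ({..d} \<times> {..d})"
  define p :: "(nat \<times> nat) + (nat \<times> nat) \<Rightarrow> 'a" where
    "p = case_sum (\<lambda>(a, b). lo a) (\<lambda>(a, b). lo a)"
  define q :: "(nat \<times> nat) + (nat \<times> nat) \<Rightarrow> 'a" where
    "q = case_sum (\<lambda>(a, b). lo b) (\<lambda>(a, b). if (a, b) \<in> calU d R then hi b else lo b)"
  define rank :: "(nat \<times> nat) + (nat \<times> nat) \<Rightarrow> nat" where
    "rank = case_sum (\<lambda>_. 1) (\<lambda>_. 0)"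
  have index_cases: "(\<And>a b. i = Inl (a, b) \<Longrightarrow> (a, b) \<in> calU d R \<Longrightarrow> P) \<Longrightarrow>
      (\<And>a b. i = Inr (a, b) \<Longrightarrow> a \<le> d \<Longrightarrow> b \<le> d \<Longrightarrow> P) \<Longrightarrow> P" if "i \<in> I" for i P
    using that unfolding I_def by auto
  have Bmat_nz: "f (Inl (a, b)) u v \<noteq> 0 \<longleftrightarrow> cls u = a \<and> cls v = b \<and> (is_lo u \<longleftrightarrow> is_lo v)"
    if "(a, b) \<in> calU d R" for a b u v
    by (simp add: f_def Bmat_apply calU_valency[OF that])
  have block_nz: "f (Inr (a, b)) u v \<noteq> 0 \<longleftrightarrow> cls u = a \<and> cls v = b"
    if "a \<le> d" "b \<le> d" for a b u v
    using that by (simp add: f_def block_apply allones_def)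
  note lo_hi = cls_lo_hi is_lo_lo not_is_lo_hi calU_valency
  have "\<not> module.dependent msmult (f ` I)"
  proof (rule independent_if_triangular)
    fix i assume "i \<in> I"
    then show "f i (p i) (q i) \<noteq> 0"
      by (rule index_cases) (use lo_hi Bmat_nz block_nz in \<open>auto simp: p_def q_def\<close>)
  next
    fix i j assume i: "i \<in> I" and j: "j \<in> I" and nz: "f j (p i) (q i) \<noteq> 0" and ne: "f j \<noteq> f i"
    show "rank j < rank i"
      using i
    proof (rule index_cases)
      fix a b assume ab: "i = Inl (a, b)" "(a, b) \<in> calU d R"
      from j show ?thesis
        by (rule index_cases) (use ab nz ne lo_hi Bmat_nz in \<open>auto simp: p_def q_def rank_def\<close>)
    next
      fix a b assume ab: "i = Inr (a, b)" "a \<le> d" "b \<le> d"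
      from j show ?thesis
        by (rule index_cases)
          (use ab nz ne lo_hi Bmat_nz block_nz in \<open>auto simp: p_def q_def split: if_splits\<close>)
    qed
  qed
  moreover have "f ` I = basis"
    unfolding basis_def f_def I_def image_Un image_image by (auto simp: image_iff)
  ultimately show ?thesis by simp
qed

theorem basis_of_terwilliger:
  "\<not> module.dependent msmult (basis :: ('a \<Rightarrow> 'a \<Rightarrow> 'f::field) set) \<and>
   module.span msmult basis = terwilliger d R x"
  using basis_independent span_basis_subset pattern_constant_in_span terwilliger_pattern_constant
  by blast

end

theorem corollary4p6:
  fixes d :: nat and R :: "nat \<Rightarrow> ('a::finite \<times> 'a) set" and x :: 'a
    and r :: "'a rel"
  assumes "is_scheme d R"
    and "quasi_thin d R"
    and "linear_order_on UNIV r"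
  shows "\<not> module.dependent (msmult :: 'f::field \<Rightarrow> _)
            ({Bmat r R x i j | i j. (i, j) \<in> calU d R}
             \<union> {mmult (mmult (dual_idem R x y) allones) (dual_idem R x z) | y z. y \<le> d \<and> z \<le> d})
       \<and> module.span (msmult :: 'f::field \<Rightarrow> _)
            ({Bmat r R x i j | i j. (i, j) \<in> calU d R}
             \<union> {mmult (mmult (dual_idem R x y) allones) (dual_idem R x z) | y z. y \<le> d \<and> z \<le> d})
         = terwilliger d R x"
proof -
  interpret ordered_quasi_thin_scheme d R x r
    using assms by unfold_locales
  show ?thesis
    using basis_of_terwilliger unfolding basis_def block_def .
qed

end
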